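(* Suppose $k,m\ge 0$ are integers, $1\le d_1\le\cdots\le d_k$ and $1\le e_1<e_2<\cdots<e_\ell$ are integers, and $$\sum_{i=1}^k(1+2^{-d_i})=m+\sum_{i=1}^\ell 2^{-e_i}.$$ Then $m\ge\ell$. *)

theory Defs
  imports Complex_Main
begin

end

theory Submission
  imports Defs "HOL-Library.Nat_Bijection"
begin

text \<open>
  Multiply the equation by a power \<open>2^N\<close> of two that clears all denominators. The
  right-hand side becomes \<open>m 2^N\<close> plus a number whose binary digits are the \<open>l\<close> distinct
  positions \<open>N - e\<^sub>i < N\<close>, the left-hand side \<open>k 2^N\<close> plus a sum of \<open>k\<close> powers of two.
  Comparing the parts above \<open>2^N\<close> gives \<open>k \<le> m\<close>; and since adding a power of two raises the
  number of binary digits by at most one (a carry only merges digits), a sum of \<open>k\<close> powers of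
  two has at most \<open>k\<close> binary digits, so \<open>l \<le> k\<close>.
\<close>

lemma card_set_decode_power2_add:
  "card (set_decode (2 ^ a + z)) \<le> card (set_decode z) + 1"
proof (induction z arbitrary: a rule: less_induct)
  case (less z)
  show ?case
  proof (cases "a \<in> set_decode z")
    case False
    then show ?thesis
      by (simp add: set_decode_plus_power_2 card_insert_le_m1)
  next
    case True
    define z' where "z' = set_encode (set_decode z - {a})"
    have z_eq: "z = 2 ^ a + z'"
      using True unfolding z'_def
      by (metis set_decode_inverse finite_set_decode finite_Diff insert_Diff
          set_encode_insert Diff_iff singletonI)
    have card_z': "card (set_decode z') = card (set_decode z) - 1"
      unfolding z'_def using True by simp
    have "card (set_decode (2 ^ a + z)) = card (set_decode (2 ^ Suc a + z'))"
      by (simp add: z_eq mult_2 add.assoc)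
    also have "\<dots> \<le> card (set_decode z') + 1"
      by (rule less.IH) (simp add: z_eq)
    also have "\<dots> \<le> card (set_decode z) + 1"
      using True card_z' card_gt_0_iff[of "set_decode z"] by auto
    finally show ?thesis .
  qed
qed

lemma card_set_decode_sum_powers2:
  assumes "finite I"
  shows "card (set_decode (\<Sum>i\<in>I. 2 ^ f i)) \<le> card I"
  using assms
proof (induction I rule: finite_induct)
  case (insert x I)
  then show ?case
    using card_set_decode_power2_add[of "f x" "\<Sum>i\<in>I. 2 ^ f i"] by simp
qed simp

lemma set_encode_less_power2:
  assumes "B \<subseteq> {..<N}"
  shows "set_encode B < 2 ^ N"
proof -
  have "set_encode B \<le> (\<Sum>j<N. 2 ^ j)"
    unfolding set_encode_def by (rule sum_mono2) (use assms in auto)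
  also have "\<dots> < 2 ^ N"
    using sum_power2[of N] by (simp add: atLeast0LessThan)
  finally show ?thesis .
qed

lemma set_encode_shift: "set_encode ((+) N ` A) = 2 ^ N * set_encode A"
  by (simp add: set_encode_def sum.reindex sum_distrib_left power_add)

lemma set_decode_set_encode_add_mult_power2:
  assumes "B \<subseteq> {..<N}"
  shows "set_decode (set_encode B + 2 ^ N * A) = B \<union> (+) N ` set_decode A"
proof -
  have "finite B"
    using assms finite_subset by blast
  moreover have "B \<inter> (+) N ` set_decode A = {}"
    using assms by auto
  ultimately have "set_encode (B \<union> (+) N ` set_decode A)
      = set_encode B + set_encode ((+) N ` set_decode A)"
    unfolding set_encode_def by (simp add: sum.union_disjoint)
  also have "\<dots> = set_encode B + 2 ^ N * A"
    by (simp add: set_encode_shift)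
  finally have "set_encode B + 2 ^ N * A = set_encode (B \<union> (+) N ` set_decode A)" ..
  then show ?thesis
    using \<open>finite B\<close> by simp
qed

lemma card_le_if_sum_powers2_eq:
  assumes "finite I" and "B \<subseteq> {..<N}"
    and eq: "card I * 2 ^ N + (\<Sum>i\<in>I. 2 ^ f i) = m * 2 ^ N + set_encode B"
  shows "card B \<le> card I" and "card I \<le> m"
proof -
  have "card I * 2 ^ N < (m + 1) * 2 ^ N"
    using eq set_encode_less_power2[OF assms(2)] by simp
  then show "card I \<le> m"
    by (metis mult_less_cancel2 Suc_eq_plus1 less_Suc_eq_le)
  then obtain j where "m = card I + j"
    using le_Suc_ex by blast
  then have "(\<Sum>i\<in>I. 2 ^ f i) = set_encode B + 2 ^ N * j"
    using eq by (simp add: algebra_simps)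
  then have "B \<subseteq> set_decode (\<Sum>i\<in>I. 2 ^ f i)"
    using set_decode_set_encode_add_mult_power2[OF assms(2)] by simp
  then have "card B \<le> card (set_decode (\<Sum>i\<in>I. 2 ^ f i))"
    by (simp add: card_mono)
  also have "\<dots> \<le> card I"
    by (rule card_set_decode_sum_powers2[OF assms(1)])
  finally show "card B \<le> card I" .
qed

lemma sum_half_powers_mult_power2:
  assumes "\<forall>i\<in>I. a i \<le> N"
  shows "(\<Sum>i\<in>I. (1/2::real) ^ a i) * 2 ^ N = real (\<Sum>i\<in>I. 2 ^ (N - a i))"
proof -
  have "(1/2::real) ^ a i * 2 ^ N = 2 ^ (N - a i)" if "i \<in> I" for i
    using assms that by (simp add: power_one_over field_simps flip: power_add)
  then show ?thesis
    by (simp add: sum_distrib_right)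
qed

lemma sum_half_powers_eq_scaled:
  assumes "\<forall>i\<in>I. a i \<le> N" and "\<forall>j\<in>J. b j \<le> N"
    and eq: "(\<Sum>i\<in>I. (1 + (1/2::real) ^ a i)) = real m + (\<Sum>j\<in>J. (1/2::real) ^ b j)"
  shows "card I * 2 ^ N + (\<Sum>i\<in>I. 2 ^ (N - a i)) = m * 2 ^ N + (\<Sum>j\<in>J. 2 ^ (N - b j))"
proof -
  have "real (card I * 2 ^ N + (\<Sum>i\<in>I. 2 ^ (N - a i)))
      = (\<Sum>i\<in>I. (1 + (1/2::real) ^ a i)) * 2 ^ N"
    using sum_half_powers_mult_power2[OF assms(1)] by (simp add: sum.distrib distrib_right)
  also have "\<dots> = (real m + (\<Sum>j\<in>J. (1/2::real) ^ b j)) * 2 ^ N"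
    by (simp only: eq)
  also have "\<dots> = real (m * 2 ^ N + (\<Sum>j\<in>J. 2 ^ (N - b j)))"
    using sum_half_powers_mult_power2[OF assms(2)] by (simp add: distrib_right)
  finally show ?thesis
    by (simp only: of_nat_eq_iff)
qed

theorem mainTheorem8:
  fixes k m l :: nat and d e :: "nat \<Rightarrow> nat"
  assumes d_pos: "\<forall>i\<in>{1..k}. 1 \<le> d i"
    and d_mono: "\<forall>i\<in>{1..k}. \<forall>j\<in>{1..k}. i \<le> j \<longrightarrow> d i \<le> d j"
    and e_pos: "\<forall>i\<in>{1..l}. 1 \<le> e i"
    and e_strict: "\<forall>i\<in>{1..l}. \<forall>j\<in>{1..l}. i < j \<longrightarrow> e i < e j"
    and eq: "(\<Sum>i=1..k. (1 + (1/2::real) ^ d i)) = real m + (\<Sum>i=1..l. (1/2::real) ^ e i)"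
  shows "m \<ge> l"
proof -
  define N where "N = (\<Sum>i=1..k. d i) + (\<Sum>i=1..l. e i)"
  have d_le: "\<forall>i\<in>{1..k}. d i \<le> N" and e_le: "\<forall>i\<in>{1..l}. e i \<le> N"
    unfolding N_def by (auto intro: trans_le_add1 trans_le_add2 member_le_sum)
  define B where "B = (\<lambda>i. N - e i) ` {1..l}"
  have inj: "inj_on (\<lambda>i. N - e i) {1..l}"
    using e_strict e_le by (intro inj_onI) (metis diff_diff_cancel linorder_neqE_nat less_irrefl)
  have "B \<subseteq> {..<N}"
    using e_pos e_le unfolding B_def by fastforce
  moreover have "k * 2 ^ N + (\<Sum>i\<in>{1..k}. 2 ^ (N - d i)) = m * 2 ^ N + set_encode B"
  proof -
    have "(\<Sum>i\<in>{1..l}. 2 ^ (N - e i)) = set_encode B"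
      unfolding B_def set_encode_def using sum.reindex[OF inj, of "(^) (2::nat)"] by (simp add: o_def)
    then show ?thesis
      using sum_half_powers_eq_scaled[OF d_le e_le eq] by simp
  qed
  ultimately have "card B \<le> k" and "k \<le> m"
    using card_le_if_sum_powers2_eq[of "{1..k}" B N "\<lambda>i. N - d i" m] by simp_all
  moreover have "card B = l"
    using card_image[OF inj] unfolding B_def by simp
  ultimately show ?thesis
    by simp
qed

end
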